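(* Let $X$ be a finite set. Define $\Phi:\mathbf{Net}(X)\to\mathbf{Cliqgm}(X)$ by letting $\Phi(N_X)(t)$ be the set of maximal cliques of the graph $G_t=(V_t,E_t)$ with $V_t=\{x\in X\mid N_X(x,x)\leq t\}$ and $E_t=\{\{x,x'\}\subset X\mid x\neq x',\ N_X(x,x')\leq t\}$ (equivalently, $\Phi(N_X)(t)$ is the join in $\mathbf{Cliq}(X)$ of the clique-sets $\{\{x,x'\}\}$ over all $x,x'\in X$ with $N_X(x,x')\leq t$). Define $\Psi:\mathbf{Cliqgm}(X)\to\mathbf{Net}(X)$ by $$\Psi(C_X)(x,x'):=\min\{t\in\mathbb{R}\mid x,x'\text{ belong to some clique in }C_X(t)\}.$$ Then $\Phi$ and $\Psi$ are well defined, mutually inverse bijections, and they are isomorphisms of posets: for $N_X,N'_X\in\mathbf{Net}(X)$, $N_X\geq N'_X$ entrywise if and only if $\Phi(N_X)(t)\leq\Phi(N'_X)(t)$ for all $t\in\mathbb{R}$.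
   Context: A phylogenetic network over a finite set $X$ is a map $N_X:X\times X\to\mathbb{R}$ with $N_X(x,x')=N_X(x',x)$ and $\max\{N_X(x,x),N_X(x',x')\}\leq N_X(x,x')$ for all $x,x'\in X$; $\mathbf{Net}(X)$ is the set of these, ordered by $N_X\leq N'_X$ iff $N_X\geq N'_X$ entrywise. A clique-set of $X$ is a set $\mathcal{C}$ of nonempty subsets of $X$ (cliques) such that (i) no member of $\mathcal{C}$ is contained in another member, and (ii) for every nonempty $Y\subset X$, if every pair $y,y'\in Y$ (possibly $y=y'$) is contained in some member of $\mathcal{C}$, then $Y$ is contained in some member of $\mathcal{C}$. $\mathbf{Cliq}(X)$ is the set of clique-sets, ordered by $\mathcal{C}\leq\mathcal{C}'$ iff every member of $\mathcal{C}$ is contained in some member of $\mathcal{C}'$; the join of clique-sets is the set of maximal cliques of the union of their associated graphs (vertices = union of members, edges = pairs of distinct elements lying in a common member). A cliquegram over $X$ is a map $C_X:\mathbb{R}\to\mathbf{Cliq}(X)$ such that (1) $C_X(t)\leq C_X(s)$ for $t\leq s$; (2) there are $t_0,t_1\in\mathbb{R}$ with $C_X(t)=\{X\}$ for $t\geq t_0$ and $C_X(t)=\emptyset$ for $t\leq t_1$; (3) there are real numbers $a_1<\dots<a_n$ with $C_X$ constant on $(-\infty,a_1)$, on each $[a_i,a_{i+1})$ and on $[a_n,\infty)$. $\mathbf{Cliqgm}(X)$ is the set of cliquegrams ordered pointwise. The maximal cliques of a graph are the inclusion-maximal vertex subsets that are pairwise adjacent. *)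

theory Defs
  imports Complex_Main "HOL-Library.FuncSet"
begin

definition Net :: "'a set \<Rightarrow> ('a \<times> 'a \<Rightarrow> real) set" where
  "Net X = {N. N \<in> extensional (X \<times> X) \<and>
      (\<forall>x\<in>X. \<forall>x'\<in>X. N (x, x') = N (x', x) \<and> max (N (x, x)) (N (x', x')) \<le> N (x, x'))}"

definition Cliq :: "'a set \<Rightarrow> 'a set set set" where
  "Cliq X = {C. (\<forall>K\<in>C. K \<noteq> {} \<and> K \<subseteq> X) \<and>
      (\<forall>K\<in>C. \<forall>K'\<in>C. K \<subseteq> K' \<longrightarrow> K = K') \<and>
      (\<forall>Y. Y \<noteq> {} \<and> Y \<subseteq> X \<and> (\<forall>y\<in>Y. \<forall>y'\<in>Y. \<exists>K\<in>C. y \<in> K \<and> y' \<in> K)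
           \<longrightarrow> (\<exists>K\<in>C. Y \<subseteq> K))}"

definition cliq_le :: "'a set set \<Rightarrow> 'a set set \<Rightarrow> bool" where
  "cliq_le C C' \<longleftrightarrow> (\<forall>K\<in>C. \<exists>K'\<in>C'. K \<subseteq> K')"

definition Cliqgm :: "'a set \<Rightarrow> (real \<Rightarrow> 'a set set) set" where
  "Cliqgm X = {C. (\<forall>t. C t \<in> Cliq X) \<and>
      (\<forall>t s. t \<le> s \<longrightarrow> cliq_le (C t) (C s)) \<and>
      (\<exists>t0 t1. (\<forall>t\<ge>t0. C t = {X}) \<and> (\<forall>t\<le>t1. C t = {})) \<and>
      (\<exists>a::real list. a \<noteq> [] \<and> sorted_wrt (<) a \<and>
         (\<forall>s t. s < hd a \<and> t < hd a \<longrightarrow> C s = C t) \<and>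
         (\<forall>i. Suc i < length a \<longrightarrow>
            (\<forall>s t. s \<in> {a ! i ..< a ! Suc i} \<and> t \<in> {a ! i ..< a ! Suc i} \<longrightarrow> C s = C t)) \<and>
         (\<forall>s t. last a \<le> s \<and> last a \<le> t \<longrightarrow> C s = C t))}"

text \<open>Maximal cliques of the graph with vertex set V and edge set E (edges are
  2-element sets). Cliques are nonempty (so the empty graph has no maximal cliques).\<close>
definition is_clique :: "'a set \<Rightarrow> 'a set set \<Rightarrow> 'a set \<Rightarrow> bool" where
  "is_clique V E K \<longleftrightarrow> K \<noteq> {} \<and> K \<subseteq> V \<and> (\<forall>x\<in>K. \<forall>y\<in>K. x \<noteq> y \<longrightarrow> {x, y} \<in> E)"

definition maximal_cliques :: "'a set \<Rightarrow> 'a set set \<Rightarrow> 'a set set" where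
  "maximal_cliques V E = {K. is_clique V E K \<and> (\<forall>K'. is_clique V E K' \<and> K \<subseteq> K' \<longrightarrow> K' = K)}"

definition Phi :: "'a set \<Rightarrow> ('a \<times> 'a \<Rightarrow> real) \<Rightarrow> real \<Rightarrow> 'a set set" where
  "Phi X N t = maximal_cliques {x\<in>X. N (x, x) \<le> t}
      {{x, x'} | x x'. x \<in> X \<and> x' \<in> X \<and> x \<noteq> x' \<and> N (x, x') \<le> t}"

definition Psi :: "'a set \<Rightarrow> (real \<Rightarrow> 'a set set) \<Rightarrow> ('a \<times> 'a \<Rightarrow> real)" where
  "Psi X C = (\<lambda>(x, x') \<in> X \<times> X. LEAST t. \<exists>K\<in>C t. x \<in> K \<and> x' \<in> K)"

end

theory Submission
  imports Defs
begin

text \<open>A clique-set is determined by its co-occurrence relation (which pairs lie in a common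
  clique): by condition (ii) it consists of the maximal cliques of the co-occurrence graph.
  In \<open>Phi X N t\<close> the pair \<open>x, x'\<close> co-occurs iff \<open>N (x, x') \<le> t\<close>, so \<open>Psi\<close> recovers \<open>N\<close>.
  Conversely a cliquegram is piecewise constant with finitely many breakpoints, so the first
  time at which \<open>x, x'\<close> co-occur is attained at a breakpoint; \<open>Psi\<close> records these times and
  \<open>Phi\<close> rebuilds each level from them.  Both maps are monotone, hence poset isomorphisms.\<close>

subsection \<open>Clique-sets and maximal cliques\<close>

abbreviation in_common_clique :: "'a set set \<Rightarrow> 'a \<Rightarrow> 'a \<Rightarrow> bool" where
  "in_common_clique D x y \<equiv> \<exists>K\<in>D. x \<in> K \<and> y \<in> K"

lemma cliq_le_in_common_clique:
  "cliq_le D D' \<Longrightarrow> in_common_clique D x y \<Longrightarrow> in_common_clique D' x y"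
  unfolding cliq_le_def by (meson subsetD)

lemma clique_extends_to_maximal:
  assumes "finite V" "is_clique V E K"
  shows "\<exists>M\<in>maximal_cliques V E. K \<subseteq> M"
proof -
  let ?S = "{K'. is_clique V E K' \<and> K \<subseteq> K'}"
  have "?S \<subseteq> Pow V" by (auto simp: is_clique_def)
  then have "finite ?S" using assms(1) by (simp add: finite_subset)
  moreover have "?S \<noteq> {}" using assms(2) by blast
  ultimately obtain M where M: "M \<in> ?S" "\<forall>M'\<in>?S. M \<subseteq> M' \<longrightarrow> M = M'"
    by (meson finite_has_maximal)
  have "M \<in> maximal_cliques V E"
    unfolding maximal_cliques_def
  proof (intro CollectI conjI allI impI)
    show "is_clique V E M" using M(1) by simp
    fix K' assume "is_clique V E K' \<and> M \<subseteq> K'"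
    then show "K' = M" using M by (metis (mono_tags, lifting) mem_Collect_eq order_trans)
  qed
  then show ?thesis using M(1) by blast
qed

lemma maximal_cliques_mono:
  assumes "finite V'" "\<And>K. is_clique V E K \<Longrightarrow> is_clique V' E' K"
  shows "cliq_le (maximal_cliques V E) (maximal_cliques V' E')"
  unfolding cliq_le_def
proof
  fix K assume "K \<in> maximal_cliques V E"
  then have "is_clique V' E' K" using assms(2) unfolding maximal_cliques_def by blast
  then show "\<exists>K'\<in>maximal_cliques V' E'. K \<subseteq> K'" by (rule clique_extends_to_maximal[OF assms(1)])
qed

lemma Cliq_members: "D \<in> Cliq X \<Longrightarrow> K \<in> D \<Longrightarrow> K \<noteq> {} \<and> K \<subseteq> X"
  unfolding Cliq_def by blast

lemma Cliq_antichain: "D \<in> Cliq X \<Longrightarrow> K \<in> D \<Longrightarrow> K' \<in> D \<Longrightarrow> K \<subseteq> K' \<Longrightarrow> K = K'"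
  unfolding Cliq_def by blast

lemma Cliq_covering:
  "D \<in> Cliq X \<Longrightarrow> Y \<noteq> {} \<Longrightarrow> Y \<subseteq> X \<Longrightarrow> \<forall>y\<in>Y. \<forall>y'\<in>Y. in_common_clique D y y' \<Longrightarrow>
    \<exists>K\<in>D. Y \<subseteq> K"
  unfolding Cliq_def by blast

lemma maximal_cliques_in_Cliq:
  assumes "finite V" "V \<subseteq> X"
  shows "maximal_cliques V E \<in> Cliq X"
  unfolding Cliq_def
proof (intro CollectI conjI ballI allI impI)
  fix K assume "K \<in> maximal_cliques V E"
  then show "K \<noteq> {}" "K \<subseteq> X" using assms by (auto simp: maximal_cliques_def is_clique_def)
next
  fix K K' assume "K \<in> maximal_cliques V E" "K' \<in> maximal_cliques V E" "K \<subseteq> K'"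
  then show "K = K'" by (auto simp: maximal_cliques_def)
next
  fix Y assume Y: "Y \<noteq> {} \<and> Y \<subseteq> X \<and> (\<forall>y\<in>Y. \<forall>y'\<in>Y. in_common_clique (maximal_cliques V E) y y')"
  have "is_clique V E Y"
    unfolding is_clique_def
  proof (intro conjI ballI impI)
    show "Y \<noteq> {}" using Y by blast
    show "Y \<subseteq> V"
    proof
      fix y assume "y \<in> Y"
      then obtain K where "K \<in> maximal_cliques V E" "y \<in> K" using Y by blast
      then show "y \<in> V" unfolding maximal_cliques_def is_clique_def by blast
    qed
    fix x y assume "x \<in> Y" "y \<in> Y" "x \<noteq> y"
    then obtain K where "K \<in> maximal_cliques V E" "x \<in> K" "y \<in> K" using Y by blast
    then show "{x, y} \<in> E" using \<open>x \<noteq> y\<close> unfolding maximal_cliques_def is_clique_def by blast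
  qed
  then show "\<exists>K\<in>maximal_cliques V E. Y \<subseteq> K" by (rule clique_extends_to_maximal[OF assms(1)])
qed

text \<open>Condition (ii) puts every clique of the co-occurrence graph of \<open>D\<close> inside a member
  of \<open>D\<close>, so its maximal cliques are exactly the members of \<open>D\<close>.\<close>

lemma maximal_cliques_eq_Cliq:
  assumes D: "D \<in> Cliq X"
    and cliques: "\<And>K. is_clique V E K \<longleftrightarrow>
      K \<noteq> {} \<and> K \<subseteq> X \<and> (\<forall>x\<in>K. \<forall>y\<in>K. in_common_clique D x y)"
  shows "maximal_cliques V E = D"
proof -
  have inside: "\<exists>K\<in>D. Y \<subseteq> K" if "is_clique V E Y" for Y
    using that Cliq_covering[OF D] unfolding cliques by blast
  have member_clique: "is_clique V E K" if "K \<in> D" for K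
    using Cliq_members[OF D that] that unfolding cliques by blast
  show ?thesis
  proof (intro set_eqI iffI)
    fix M assume "M \<in> maximal_cliques V E"
    then have M: "is_clique V E M" "\<And>K'. is_clique V E K' \<Longrightarrow> M \<subseteq> K' \<Longrightarrow> K' = M"
      unfolding maximal_cliques_def by blast+
    obtain K where "K \<in> D" "M \<subseteq> K" using inside[OF M(1)] by blast
    then show "M \<in> D" using M(2) member_clique by metis
  next
    fix K assume K: "K \<in> D"
    have "K' = K" if K': "is_clique V E K'" "K \<subseteq> K'" for K'
    proof -
      obtain K'' where "K'' \<in> D" "K' \<subseteq> K''" using inside[OF K'(1)] by blast
      then show ?thesis using Cliq_antichain[OF D K] K'(2) by blast
    qed
    then show "K \<in> maximal_cliques V E"
      using member_clique[OF K] unfolding maximal_cliques_def by blast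
  qed
qed

subsection \<open>Piecewise constant functions\<close>

definition piecewise_const :: "real list \<Rightarrow> (real \<Rightarrow> 'b) \<Rightarrow> bool" where
  "piecewise_const a f \<longleftrightarrow> a \<noteq> [] \<and> sorted_wrt (<) a \<and>
      (\<forall>s t. s < hd a \<and> t < hd a \<longrightarrow> f s = f t) \<and>
      (\<forall>i. Suc i < length a \<longrightarrow>
         (\<forall>s t. s \<in> {a ! i ..< a ! Suc i} \<and> t \<in> {a ! i ..< a ! Suc i} \<longrightarrow> f s = f t)) \<and>
      (\<forall>s t. last a \<le> s \<and> last a \<le> t \<longrightarrow> f s = f t)"

lemma piecewise_constD:
  assumes "piecewise_const a f"
  shows piecewise_const_nonempty: "a \<noteq> []"
    and piecewise_const_sorted: "sorted_wrt (<) a"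
    and piecewise_const_before: "s < hd a \<Longrightarrow> t < hd a \<Longrightarrow> f s = f t"
    and piecewise_const_between: "Suc i < length a \<Longrightarrow> s \<in> {a ! i ..< a ! Suc i} \<Longrightarrow>
      t \<in> {a ! i ..< a ! Suc i} \<Longrightarrow> f s = f t"
    and piecewise_const_after: "last a \<le> s \<Longrightarrow> last a \<le> t \<Longrightarrow> f s = f t"
  using assms unfolding piecewise_const_def by meson+

lemma piecewise_const_sorted_list_of_set:
  fixes S :: "real set"
  assumes "finite S" "S \<noteq> {}"
    and same: "\<And>s t. (\<forall>v\<in>S. v \<le> s \<longleftrightarrow> v \<le> t) \<Longrightarrow> f s = f t"
  shows "piecewise_const (sorted_list_of_set S) f"
proof -
  let ?a = "sorted_list_of_set S"
  have set_a: "set ?a = S" and sorted: "sorted_wrt (<) ?a"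
    using assms(1) by simp_all
  have ne: "?a \<noteq> []" using assms by simp
  have le_nth: "?a ! i \<le> ?a ! j" if "i \<le> j" "j < length ?a" for i j
    using sorted_wrt_nth_less[OF sorted, of i j] that by (cases "i = j") auto
  have all_nth: "\<forall>v\<in>S. P v" if "\<And>j. j < length ?a \<Longrightarrow> P (?a ! j)" for P
    using that set_a by (metis in_set_conv_nth)
  have between: "f s = f t"
    if "Suc i < length ?a" "s \<in> {?a ! i ..< ?a ! Suc i}" "t \<in> {?a ! i ..< ?a ! Suc i}" for i s t
  proof (rule same, rule all_nth)
    fix j assume "j < length ?a"
    then have "?a ! j \<le> ?a ! i \<or> ?a ! Suc i \<le> ?a ! j"
      using le_nth[of j i] le_nth[of "Suc i" j] that(1) by (cases "j \<le> i") simp_all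
    then show "?a ! j \<le> s \<longleftrightarrow> ?a ! j \<le> t" using that(2,3) by auto
  qed
  have bounds: "hd ?a \<le> v" "v \<le> last ?a" if "v \<in> S" for v
    using that all_nth[of "\<lambda>v. hd ?a \<le> v"] all_nth[of "\<lambda>v. v \<le> last ?a"] le_nth ne
    by (auto simp: hd_conv_nth last_conv_nth)
  have "f s = f t" if "s < hd ?a \<and> t < hd ?a \<or> last ?a \<le> s \<and> last ?a \<le> t" for s t
  proof (rule same, intro ballI)
    fix v assume "v \<in> S"
    then show "v \<le> s \<longleftrightarrow> v \<le> t" using that bounds[of v] by linarith
  qed
  with between ne sorted show ?thesis unfolding piecewise_const_def by blast
qed

lemma piecewise_const_value_at_breakpoint:
  assumes pc: "piecewise_const a f" and t: "hd a \<le> t"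
  shows "\<exists>c\<in>set a. c \<le> t \<and> f c = f t"
proof -
  note ne = piecewise_const_nonempty[OF pc] and sorted = piecewise_const_sorted[OF pc]
  define I where "I = {i. i < length a \<and> a ! i \<le> t}"
  define i where "i = Max I"
  have finI: "finite I" by (simp add: I_def)
  have "0 \<in> I" using ne t by (simp add: I_def hd_conv_nth)
  then have "i \<in> I" unfolding i_def using Max_in[OF finI] by blast
  then have i: "i < length a" "a ! i \<le> t" by (simp_all add: I_def)
  have "f (a ! i) = f t"
  proof (cases "Suc i < length a")
    case True
    have "Suc i \<notin> I" using Max_ge[OF finI, of "Suc i"] unfolding i_def by linarith
    then have "t < a ! Suc i" using True by (simp add: I_def)
    moreover have "a ! i < a ! Suc i" using sorted_wrt_nth_less[OF sorted, of i "Suc i"] True by simp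
    ultimately show ?thesis by (intro piecewise_const_between[OF pc True]) (use i(2) in auto)
  next
    case False
    then have "i = length a - 1" using i(1) by simp
    then have "a ! i = last a" using ne by (simp add: last_conv_nth)
    then show ?thesis by (intro piecewise_const_after[OF pc]) (use i(2) in auto)
  qed
  then show ?thesis using nth_mem[OF i(1)] i(2) by blast
qed

subsection \<open>Cliquegrams\<close>

lemma Cliqgm_iff:
  "C \<in> Cliqgm X \<longleftrightarrow> (\<forall>t. C t \<in> Cliq X) \<and> (\<forall>t s. t \<le> s \<longrightarrow> cliq_le (C t) (C s)) \<and>
      (\<exists>t0 t1. (\<forall>t\<ge>t0. C t = {X}) \<and> (\<forall>t\<le>t1. C t = {})) \<and> (\<exists>a. piecewise_const a C)"
  unfolding Cliqgm_def piecewise_const_def by (simp only: mem_Collect_eq)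

lemma Cliqgm_Cliq: "C \<in> Cliqgm X \<Longrightarrow> C t \<in> Cliq X"
  and Cliqgm_mono: "C \<in> Cliqgm X \<Longrightarrow> t \<le> s \<Longrightarrow> cliq_le (C t) (C s)"
  unfolding Cliqgm_iff by meson+

lemma Cliqgm_bounds:
  assumes "C \<in> Cliqgm X"
  obtains t0 t1 where "\<And>t. t0 \<le> t \<Longrightarrow> C t = {X}" "\<And>t. t \<le> t1 \<Longrightarrow> C t = {}"
  using assms unfolding Cliqgm_iff by meson

lemma Cliqgm_piecewise_const:
  assumes "C \<in> Cliqgm X"
  obtains a where "piecewise_const a C"
  using assms unfolding Cliqgm_iff by meson

lemma Cliqgm_least_common_clique:
  assumes C: "C \<in> Cliqgm X" and x: "x \<in> X" and x': "x' \<in> X"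
  shows "\<exists>t. in_common_clique (C t) x x' \<and> (\<forall>s. in_common_clique (C s) x x' \<longrightarrow> t \<le> s)"
proof -
  obtain t0 t1 where top: "\<And>t. t0 \<le> t \<Longrightarrow> C t = {X}" and bot: "\<And>t. t \<le> t1 \<Longrightarrow> C t = {}"
    using Cliqgm_bounds[OF C] by metis
  obtain a where pc: "piecewise_const a C" using Cliqgm_piecewise_const[OF C] by metis
  define F where "F = {c\<in>set a. in_common_clique (C c) x x'}"
  have finF: "finite F" by (simp add: F_def)
  have below: "\<exists>c\<in>F. c \<le> t" if t: "in_common_clique (C t) x x'" for t
  proof (cases "t < hd a")
    case True
    then have "C t = C (min t t1)" by (intro piecewise_const_before[OF pc]) auto
    with bot t show ?thesis by simp
  next
    case False
    then obtain c where "c \<in> set a" "c \<le> t" "C c = C t"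
      using piecewise_const_value_at_breakpoint[OF pc] by (meson not_le)
    with t have "c \<in> F" "c \<le> t" by (simp_all add: F_def)
    then show ?thesis by blast
  qed
  have "in_common_clique (C t0) x x'" using top[of t0] x x' by simp
  then have "Min F \<in> F" using below finF Min_in by blast
  moreover have "Min F \<le> s" if "in_common_clique (C s) x x'" for s
    using below[OF that] Min_le[OF finF] order_trans by blast
  ultimately show ?thesis unfolding F_def by blast
qed

subsection \<open>From networks to cliquegrams\<close>

abbreviation threshold_vertices :: "'a set \<Rightarrow> ('a \<times> 'a \<Rightarrow> real) \<Rightarrow> real \<Rightarrow> 'a set" where
  "threshold_vertices X N t \<equiv> {x\<in>X. N (x, x) \<le> t}"

abbreviation threshold_edges :: "'a set \<Rightarrow> ('a \<times> 'a \<Rightarrow> real) \<Rightarrow> real \<Rightarrow> 'a set set" where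
  "threshold_edges X N t \<equiv> {{x, x'} | x x'. x \<in> X \<and> x' \<in> X \<and> x \<noteq> x' \<and> N (x, x') \<le> t}"

lemma mem_doubletons_iff: "{a, b} \<in> {{x, x'} | x x'. P x x'} \<longleftrightarrow> P a b \<or> P b a"
  by (auto simp: doubleton_eq_iff)

lemma Net_symmetric: "N \<in> Net X \<Longrightarrow> x \<in> X \<Longrightarrow> x' \<in> X \<Longrightarrow> N (x, x') = N (x', x)"
  and Net_diagonal_le: "N \<in> Net X \<Longrightarrow> x \<in> X \<Longrightarrow> x' \<in> X \<Longrightarrow> N (x, x) \<le> N (x, x')"
  unfolding Net_def by auto

lemma threshold_clique_iff:
  assumes sym: "\<And>x y. x \<in> X \<Longrightarrow> y \<in> X \<Longrightarrow> N (x, y) = N (y, x)"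
  shows "is_clique (threshold_vertices X N t) (threshold_edges X N t) K \<longleftrightarrow>
    K \<noteq> {} \<and> K \<subseteq> X \<and> (\<forall>x\<in>K. \<forall>y\<in>K. N (x, y) \<le> t)"
proof -
  have edge: "{x, y} \<in> threshold_edges X N t \<longleftrightarrow> N (x, y) \<le> t"
    if "x \<in> X" "y \<in> X" "x \<noteq> y" for x y
    unfolding mem_doubletons_iff using that sym[OF that(1,2)] by auto
  show ?thesis
  proof
    assume clique: "is_clique (threshold_vertices X N t) (threshold_edges X N t) K"
    then have K: "K \<noteq> {}" "K \<subseteq> X" unfolding is_clique_def by auto
    have "N (x, y) \<le> t" if "x \<in> K" "y \<in> K" for x y
    proof (cases "x = y")
      case True
      then show ?thesis using clique that unfolding is_clique_def by auto
    next
      case False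
      then show ?thesis using clique that edge K(2) unfolding is_clique_def by blast
    qed
    with K show "K \<noteq> {} \<and> K \<subseteq> X \<and> (\<forall>x\<in>K. \<forall>y\<in>K. N (x, y) \<le> t)" by blast
  next
    assume K: "K \<noteq> {} \<and> K \<subseteq> X \<and> (\<forall>x\<in>K. \<forall>y\<in>K. N (x, y) \<le> t)"
    show "is_clique (threshold_vertices X N t) (threshold_edges X N t) K"
      unfolding is_clique_def
    proof (intro conjI ballI impI)
      show "K \<noteq> {}" "K \<subseteq> threshold_vertices X N t" using K by auto
      fix x y assume "x \<in> K" "y \<in> K" "x \<noteq> y"
      then show "{x, y} \<in> threshold_edges X N t" using K edge[of x y] by blast
    qed
  qed
qed

lemma in_common_clique_Phi_iff:
  assumes N: "N \<in> Net X" and fin: "finite X" and x: "x \<in> X" and x': "x' \<in> X"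
  shows "in_common_clique (Phi X N t) x x' \<longleftrightarrow> N (x, x') \<le> t"
proof -
  have clique: "is_clique (threshold_vertices X N t) (threshold_edges X N t) K \<longleftrightarrow>
      K \<noteq> {} \<and> K \<subseteq> X \<and> (\<forall>x\<in>K. \<forall>y\<in>K. N (x, y) \<le> t)" for K
    by (rule threshold_clique_iff[of X N, OF Net_symmetric[OF N]])
  show ?thesis
  proof
    assume "in_common_clique (Phi X N t) x x'"
    then show "N (x, x') \<le> t" unfolding Phi_def maximal_cliques_def clique by blast
  next
    assume "N (x, x') \<le> t"
    then have "is_clique (threshold_vertices X N t) (threshold_edges X N t) {x, x'}"
      unfolding clique using x x' Net_symmetric[OF N x x'] Net_diagonal_le[OF N] by force
    moreover have "finite (threshold_vertices X N t)" using fin by simp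
    ultimately obtain M where "M \<in> Phi X N t" "{x, x'} \<subseteq> M"
      unfolding Phi_def using clique_extends_to_maximal by blast
    then show "in_common_clique (Phi X N t) x x'" by blast
  qed
qed

lemma Phi_antimono:
  assumes "finite X" "\<forall>x\<in>X. \<forall>x'\<in>X. N' (x, x') \<le> N (x, x')" "t \<le> s"
  shows "cliq_le (Phi X N t) (Phi X N' s)"
  unfolding Phi_def
proof (rule maximal_cliques_mono)
  show "finite (threshold_vertices X N' s)" using assms(1) by simp
  have le: "N' (x, x') \<le> s" if "x \<in> X" "x' \<in> X" "N (x, x') \<le> t" for x x'
    using assms(2,3) that by (meson order_trans)
  fix K assume K: "is_clique (threshold_vertices X N t) (threshold_edges X N t) K"
  show "is_clique (threshold_vertices X N' s) (threshold_edges X N' s) K"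
    unfolding is_clique_def
  proof (intro conjI ballI impI)
    show "K \<noteq> {}" "K \<subseteq> threshold_vertices X N' s" using K le unfolding is_clique_def by auto
    fix x y assume "x \<in> K" "y \<in> K" "x \<noteq> y"
    then have "{x, y} \<in> threshold_edges X N t" using K unfolding is_clique_def by blast
    then show "{x, y} \<in> threshold_edges X N' s" unfolding mem_doubletons_iff using le by blast
  qed
qed

lemma Phi_cong:
  assumes "\<forall>v\<in>N ` (X \<times> X). v \<le> s \<longleftrightarrow> v \<le> t"
  shows "Phi X N s = Phi X N t"
proof -
  have V: "threshold_vertices X N s = threshold_vertices X N t" using assms by auto
  have "(x \<in> X \<and> x' \<in> X \<and> x \<noteq> x' \<and> N (x, x') \<le> s) \<longleftrightarrow> (x \<in> X \<and> x' \<in> X \<and> x \<noteq> x' \<and> N (x, x') \<le> t)"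
    for x x' using assms by auto
  then show ?thesis unfolding Phi_def V by (simp only:)
qed

lemma Phi_eq_Cliq:
  assumes N: "N \<in> Net X" and fin: "finite X" and D: "D \<in> Cliq X"
    and co: "\<And>x x'. x \<in> X \<Longrightarrow> x' \<in> X \<Longrightarrow> in_common_clique D x x' \<longleftrightarrow> N (x, x') \<le> t"
  shows "Phi X N t = D"
  unfolding Phi_def
proof (rule maximal_cliques_eq_Cliq[OF D])
  fix K
  have "is_clique (threshold_vertices X N t) (threshold_edges X N t) K \<longleftrightarrow>
      K \<noteq> {} \<and> K \<subseteq> X \<and> (\<forall>x\<in>K. \<forall>y\<in>K. N (x, y) \<le> t)"
    by (rule threshold_clique_iff[of X N, OF Net_symmetric[OF N]])
  also have "\<dots> \<longleftrightarrow> K \<noteq> {} \<and> K \<subseteq> X \<and> (\<forall>x\<in>K. \<forall>y\<in>K. in_common_clique D x y)"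
  proof (intro conj_cong refl)
    assume "K \<subseteq> X"
    then show "(\<forall>x\<in>K. \<forall>y\<in>K. N (x, y) \<le> t) \<longleftrightarrow> (\<forall>x\<in>K. \<forall>y\<in>K. in_common_clique D x y)"
      using co by (simp add: subset_eq)
  qed
  finally show "is_clique (threshold_vertices X N t) (threshold_edges X N t) K \<longleftrightarrow>
      K \<noteq> {} \<and> K \<subseteq> X \<and> (\<forall>x\<in>K. \<forall>y\<in>K. in_common_clique D x y)" .
qed

lemma Phi_Cliqgm:
  assumes N: "N \<in> Net X" and fin: "finite X" and ne: "X \<noteq> {}"
  shows "Phi X N \<in> Cliqgm X"
proof -
  let ?S = "N ` (X \<times> X)"
  have finS: "finite ?S" and neS: "?S \<noteq> {}" using fin ne by auto
  have Cliq_X: "{X} \<in> Cliq X" and Cliq_empty: "{} \<in> Cliq X"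
    using ne unfolding Cliq_def by auto
  have top: "Phi X N t = {X}" if "Max ?S \<le> t" for t
    using that Max_ge[OF finS] by (intro Phi_eq_Cliq[OF N fin Cliq_X]) fastforce
  have bot: "Phi X N t = {}" if "t \<le> Min ?S - 1" for t
    using that Min_le[OF finS] by (intro Phi_eq_Cliq[OF N fin Cliq_empty]) fastforce
  have "piecewise_const (sorted_list_of_set ?S) (Phi X N)"
    using finS neS Phi_cong by (rule piecewise_const_sorted_list_of_set)
  moreover have "Phi X N t \<in> Cliq X" for t
    unfolding Phi_def using fin by (intro maximal_cliques_in_Cliq) auto
  ultimately show ?thesis
    unfolding Cliqgm_iff using Phi_antimono[OF fin] top bot by blast
qed

subsection \<open>From cliquegrams to networks\<close>

lemma Psi_le_iff:
  assumes C: "C \<in> Cliqgm X" and x: "x \<in> X" and x': "x' \<in> X"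
  shows "Psi X C (x, x') \<le> t \<longleftrightarrow> in_common_clique (C t) x x'"
proof -
  obtain m where m: "in_common_clique (C m) x x'" "\<forall>s. in_common_clique (C s) x x' \<longrightarrow> m \<le> s"
    using Cliqgm_least_common_clique[OF C x x'] by blast
  have "Psi X C (x, x') = m"
    unfolding Psi_def using x x' m by (auto intro!: Least_equality)
  moreover have "in_common_clique (C t) x x'" if "m \<le> t"
    using cliq_le_in_common_clique[OF Cliqgm_mono[OF C that] m(1)] .
  ultimately show ?thesis using m(2) by blast
qed

lemma Psi_Net:
  assumes C: "C \<in> Cliqgm X"
  shows "Psi X C \<in> Net X"
  unfolding Net_def
proof (intro CollectI conjI ballI)
  show "Psi X C \<in> extensional (X \<times> X)" unfolding Psi_def by simp
  fix x x' assume x: "x \<in> X" and x': "x' \<in> X"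
  note le_iff = Psi_le_iff[OF C]
  show "Psi X C (x, x') = Psi X C (x', x)"
    using le_iff[OF x x'] le_iff[OF x' x] by (meson order.antisym order.refl)
  show "max (Psi X C (x, x)) (Psi X C (x', x')) \<le> Psi X C (x, x')"
    using le_iff[OF x x', of "Psi X C (x, x')"] le_iff[OF x x] le_iff[OF x' x'] by auto
qed

lemma Psi_Phi:
  assumes N: "N \<in> Net X" and fin: "finite X"
  shows "Psi X (Phi X N) = N"
proof
  fix z
  show "Psi X (Phi X N) z = N z"
  proof (cases "z \<in> X \<times> X")
    case True
    then obtain x x' where "z = (x, x')" "x \<in> X" "x' \<in> X" by blast
    then show ?thesis
      unfolding Psi_def using in_common_clique_Phi_iff[OF N fin] by (auto intro!: Least_equality)
  next
    case False
    then show ?thesis using N unfolding Psi_def Net_def extensional_def by (cases z) auto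
  qed
qed

lemma Phi_Psi:
  assumes C: "C \<in> Cliqgm X" and fin: "finite X"
  shows "Phi X (Psi X C) = C"
proof
  fix t
  show "Phi X (Psi X C) t = C t"
    using Phi_eq_Cliq[OF Psi_Net[OF C] fin Cliqgm_Cliq[OF C]] Psi_le_iff[OF C] by blast
qed

lemma Phi_le_iff:
  assumes N: "N \<in> Net X" and N': "N' \<in> Net X" and fin: "finite X"
  shows "(\<forall>x\<in>X. \<forall>x'\<in>X. N (x, x') \<ge> N' (x, x')) \<longleftrightarrow> (\<forall>t. cliq_le (Phi X N t) (Phi X N' t))"
proof
  assume "\<forall>x\<in>X. \<forall>x'\<in>X. N (x, x') \<ge> N' (x, x')"
  then show "\<forall>t. cliq_le (Phi X N t) (Phi X N' t)" using Phi_antimono[OF fin] by blast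
next
  assume le: "\<forall>t. cliq_le (Phi X N t) (Phi X N' t)"
  show "\<forall>x\<in>X. \<forall>x'\<in>X. N (x, x') \<ge> N' (x, x')"
  proof (intro ballI)
    fix x x' assume x: "x \<in> X" and x': "x' \<in> X"
    have "in_common_clique (Phi X N (N (x, x'))) x x'"
      using in_common_clique_Phi_iff[OF N fin x x'] by simp
    then have "in_common_clique (Phi X N' (N (x, x'))) x x'"
      by (rule cliq_le_in_common_clique[OF le[rule_format]])
    then show "N (x, x') \<ge> N' (x, x')" using in_common_clique_Phi_iff[OF N' fin x x'] by simp
  qed
qed

theorem mainTheorem2:
  fixes X :: "'a set"
  assumes "finite X" and "X \<noteq> {}"
  shows "(\<forall>N\<in>Net X. Phi X N \<in> Cliqgm X)
    \<and> (\<forall>C\<in>Cliqgm X. \<forall>x\<in>X. \<forall>x'\<in>X. \<exists>t. (\<exists>K\<in>C t. x \<in> K \<and> x' \<in> K) \<and>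
          (\<forall>s. (\<exists>K\<in>C s. x \<in> K \<and> x' \<in> K) \<longrightarrow> t \<le> s))
    \<and> (\<forall>C\<in>Cliqgm X. Psi X C \<in> Net X)
    \<and> (\<forall>N\<in>Net X. Psi X (Phi X N) = N)
    \<and> (\<forall>C\<in>Cliqgm X. Phi X (Psi X C) = C)
    \<and> bij_betw (Phi X) (Net X) (Cliqgm X)
    \<and> (\<forall>N\<in>Net X. \<forall>N'\<in>Net X.
          (\<forall>x\<in>X. \<forall>x'\<in>X. N (x, x') \<ge> N' (x, x')) \<longleftrightarrow> (\<forall>t. cliq_le (Phi X N t) (Phi X N' t)))"
proof -
  have Phi: "\<forall>N\<in>Net X. Phi X N \<in> Cliqgm X" using Phi_Cliqgm assms by blast
  have Psi: "\<forall>C\<in>Cliqgm X. Psi X C \<in> Net X" using Psi_Net by blast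
  have Psi_Phi: "\<forall>N\<in>Net X. Psi X (Phi X N) = N" using Psi_Phi assms(1) by blast
  have Phi_Psi: "\<forall>C\<in>Cliqgm X. Phi X (Psi X C) = C" using Phi_Psi assms(1) by blast
  have "bij_betw (Phi X) (Net X) (Cliqgm X)"
    using Phi Psi by (intro bij_betw_byWitness[where f = "Phi X" and f' = "Psi X", OF Psi_Phi Phi_Psi]) auto
  moreover have "\<forall>C\<in>Cliqgm X. \<forall>x\<in>X. \<forall>x'\<in>X. \<exists>t. in_common_clique (C t) x x' \<and>
      (\<forall>s. in_common_clique (C s) x x' \<longrightarrow> t \<le> s)"
    by (intro ballI) (rule Cliqgm_least_common_clique)
  moreover have "\<forall>N\<in>Net X. \<forall>N'\<in>Net X. (\<forall>x\<in>X. \<forall>x'\<in>X. N (x, x') \<ge> N' (x, x')) \<longleftrightarrow>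
      (\<forall>t. cliq_le (Phi X N t) (Phi X N' t))"
    by (intro ballI) (rule Phi_le_iff[OF _ _ assms(1)])
  ultimately show ?thesis using Phi Psi Psi_Phi Phi_Psi by (intro conjI)
qed

end
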